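(* Every KW-complex is a Hausdorff space.
   Context: A KW-complex is a topological space $X$ built as follows: $X^0$ is a disjoint union of compact Hausdorff spaces; for $n\ge1$, $X^n$ is the pushout in the category of all topological spaces of $X^{n-1}\leftarrow\partial\Delta_n\times Y_n\to\Delta_n\times Y_n$ for some continuous attaching map and some $Y_n$ that is a disjoint union of compact Hausdorff spaces ($\Delta_n$ the topological $n$-simplex, $\partial\Delta_n$ its boundary, the right map the inclusion); and $X=\operatorname{colim}_nX^n$ in topological spaces. *)

theory Defs
  imports "HOL-Analysis.Analysis" "HOL-Homology.Simplices"
begin

text \<open>Y is (homeomorphic, via the canonical map, to) the topological disjoint union
  of a family of subspaces, each of which is compact Hausdorff.\<close>
definition disjoint_union_compact_Hausdorff :: "'a topology \<Rightarrow> bool" where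
  "disjoint_union_compact_Hausdorff Y \<longleftrightarrow>
     (\<exists>\<C>. homeomorphic_map (sum_topology (subtopology Y) \<C>) Y snd \<and>
          (\<forall>C\<in>\<C>. compact_space (subtopology Y C) \<and> Hausdorff_space (subtopology Y C)))"

definition simplex_top :: "nat \<Rightarrow> (nat \<Rightarrow> real) topology" where
  "simplex_top n = subtopology (powertop_real UNIV) (standard_simplex n)"

definition simplex_boundary :: "nat \<Rightarrow> (nat \<Rightarrow> real) set" where
  "simplex_boundary n = {x \<in> standard_simplex n. \<exists>i\<le>n. x i = 0}"

text \<open>Z (with maps i : C \<rightarrow> Z, j : B \<rightarrow> Z) is a pushout in Top of
  C <-f- A \<subseteq> B (A a subspace of B, right map the inclusion):
  Z carries the quotient topology of the disjoint union C + B along [i,j], and the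
  fibres of [i,j] are exactly the classes of the equivalence relation generated by
  Inl (f a) ~ Inr a for a \<in> A.\<close>
definition top_pushout ::
  "'c topology \<Rightarrow> 'b topology \<Rightarrow> 'b set \<Rightarrow> ('b \<Rightarrow> 'c) \<Rightarrow> 'z topology \<Rightarrow> ('c \<Rightarrow> 'z) \<Rightarrow> ('b \<Rightarrow> 'z) \<Rightarrow> bool"
where
  "top_pushout C B A f Z i j \<longleftrightarrow>
     continuous_map C Z i \<and> continuous_map B Z j \<and>
     (\<forall>a\<in>A. i (f a) = j a) \<and>
     topspace Z = i ` topspace C \<union> j ` topspace B \<and>
     (\<forall>U. U \<subseteq> topspace Z \<longrightarrow>
        (openin Z U \<longleftrightarrow> openin C {x \<in> topspace C. i x \<in> U} \<and> openin B {x \<in> topspace B. j x \<in> U})) \<and>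
     (\<forall>u \<in> topspace C <+> topspace B. \<forall>v \<in> topspace C <+> topspace B.
        case_sum i j u = case_sum i j v \<longleftrightarrow>
        equivclp (\<lambda>u v. \<exists>a\<in>A. u = Inl (f a) \<and> v = Inr a) u v)"

fun chain_map :: "(nat \<Rightarrow> 'a \<Rightarrow> 'a) \<Rightarrow> nat \<Rightarrow> nat \<Rightarrow> 'a \<Rightarrow> 'a" where
  "chain_map i n 0 = id"
| "chain_map i n (Suc d) = i (Suc (n + d)) \<circ> chain_map i n d"

text \<open>Xc with maps \<iota> n : X n \<rightarrow> Xc is the colimit in Top of the sequence
  X 0 -i 1-> X 1 -i 2-> X 2 -> ...\<close>
definition top_seq_colimit ::
  "(nat \<Rightarrow> 'a topology) \<Rightarrow> (nat \<Rightarrow> 'a \<Rightarrow> 'a) \<Rightarrow> 'c topology \<Rightarrow> (nat \<Rightarrow> 'a \<Rightarrow> 'c) \<Rightarrow> bool"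
where
  "top_seq_colimit X i Xc \<iota> \<longleftrightarrow>
     (\<forall>n. continuous_map (X n) Xc (\<iota> n)) \<and>
     (\<forall>n. \<forall>x\<in>topspace (X n). \<iota> (Suc n) (i (Suc n) x) = \<iota> n x) \<and>
     topspace Xc = (\<Union>n. \<iota> n ` topspace (X n)) \<and>
     (\<forall>n m x y. x \<in> topspace (X n) \<longrightarrow> y \<in> topspace (X m) \<longrightarrow> \<iota> n x = \<iota> m y \<longrightarrow>
        (\<exists>d e. n + d = m + e \<and> chain_map i n d x = chain_map i m e y)) \<and>
     (\<forall>U. U \<subseteq> topspace Xc \<longrightarrow>
        (openin Xc U \<longleftrightarrow> (\<forall>n. openin (X n) {x \<in> topspace (X n). \<iota> n x \<in> U})))"

text \<open>Cell structure data of a KW-complex: X 0 a disjoint union of compact Hausdorff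
  spaces; X (n+1) the pushout of X n <-f- \<partial>\<Delta>_(n+1) \<times> Y (n+1) \<subseteq> \<Delta>_(n+1) \<times> Y (n+1)
  with f continuous and Y (n+1) a disjoint union of compact Hausdorff spaces.\<close>
definition KW_cell_data ::
  "(nat \<Rightarrow> 'a topology) \<Rightarrow> (nat \<Rightarrow> 'b topology) \<Rightarrow> (nat \<Rightarrow> (nat \<Rightarrow> real) \<times> 'b \<Rightarrow> 'a)
   \<Rightarrow> (nat \<Rightarrow> 'a \<Rightarrow> 'a) \<Rightarrow> (nat \<Rightarrow> (nat \<Rightarrow> real) \<times> 'b \<Rightarrow> 'a) \<Rightarrow> bool"
where
  "KW_cell_data X Y f i \<Phi> \<longleftrightarrow>
     disjoint_union_compact_Hausdorff (X 0) \<and>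
     (\<forall>n. disjoint_union_compact_Hausdorff (Y (Suc n)) \<and>
          continuous_map
            (subtopology (prod_topology (simplex_top (Suc n)) (Y (Suc n)))
                         (simplex_boundary (Suc n) \<times> topspace (Y (Suc n))))
            (X n) (f (Suc n)) \<and>
          top_pushout (X n) (prod_topology (simplex_top (Suc n)) (Y (Suc n)))
            (simplex_boundary (Suc n) \<times> topspace (Y (Suc n))) (f (Suc n))
            (X (Suc n)) (i (Suc n)) (\<Phi> (Suc n)))"

end

theory Submission
  imports Defs
begin

text \<open>A space is Hausdorff as soon as continuous real-valued functions separate its points, and
  for a KW-complex this property can be established stage by stage and then passed to the
  colimit. The space \<open>X\<^sup>0\<close> and the cells \<open>\<Delta>\<^sub>n \<times> Y\<^sub>n\<close> are normal Hausdorff. By the Tietze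
  extension theorem every continuous real function on \<open>X\<^sup>n\<^sup>-\<^sup>1\<close> extends over the attached
  cells to \<open>X\<^sup>n\<close>, and a point in the interior of a cell is separated from every other point by
  an Urysohn bump function vanishing on the boundary. Finally, a function separating two points
  of \<open>X\<^sup>N\<close>, extended successively to all later stages, induces a continuous function on the
  colimit that still separates them.\<close>

lemma Hausdorff_space_open_partition:
  assumes opn: "\<And>C. C \<in> \<C> \<Longrightarrow> openin X C" and cover: "\<Union>\<C> = topspace X" and dis: "disjoint \<C>"
    and Hausdorff: "\<And>C. C \<in> \<C> \<Longrightarrow> Hausdorff_space (subtopology X C)"
  shows "Hausdorff_space X"
  unfolding Hausdorff_space_def
proof clarify
  fix x y assume "x \<in> topspace X" "y \<in> topspace X" "x \<noteq> y"
  then obtain C D where C: "C \<in> \<C>" "x \<in> C" and D: "D \<in> \<C>" "y \<in> D"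
    using cover by blast
  show "\<exists>U V. openin X U \<and> openin X V \<and> x \<in> U \<and> y \<in> V \<and> disjnt U V"
  proof (cases "C = D")
    case True
    then obtain U V where "openin (subtopology X C) U" "openin (subtopology X C) V"
        "x \<in> U" "y \<in> V" "disjnt U V"
      using Hausdorff[OF C(1)] C D \<open>x \<noteq> y\<close> \<open>x \<in> topspace X\<close> \<open>y \<in> topspace X\<close>
      unfolding Hausdorff_space_def by (metis IntI topspace_subtopology)
    then show ?thesis
      using opn[OF C(1)] openin_trans_full by blast
  next
    case False
    then show ?thesis
      using opn C D dis by (meson pairwiseD disjnt_subset1 disjnt_subset2 order_refl)
  qed
qed

lemma disjnt_UN_pieces:
  assumes dis: "disjoint \<C>" and pieces: "\<And>C. C \<in> \<C> \<Longrightarrow> U C \<union> V C \<subseteq> C \<and> disjnt (U C) (V C)"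
  shows "disjnt (\<Union>C\<in>\<C>. U C) (\<Union>C\<in>\<C>. V C)"
  unfolding disjnt_def
proof (rule equals0I)
  fix x assume "x \<in> (\<Union>C\<in>\<C>. U C) \<inter> (\<Union>C\<in>\<C>. V C)"
  then obtain C D where CD: "C \<in> \<C>" "D \<in> \<C>" "x \<in> U C" "x \<in> V D"
    by blast
  then have "x \<in> C" "x \<in> D"
    using pieces by blast+
  then have "C = D"
    using dis CD(1,2) by (meson disjnt_iff pairwiseD)
  then show False
    using pieces[OF CD(1)] CD(3,4) by (simp add: disjnt_iff)
qed

lemma normal_space_open_partition:
  assumes opn: "\<And>C. C \<in> \<C> \<Longrightarrow> openin X C" and cover: "\<Union>\<C> = topspace X" and dis: "disjoint \<C>"
    and normal: "\<And>C. C \<in> \<C> \<Longrightarrow> normal_space (subtopology X C)"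
  shows "normal_space X"
  unfolding normal_space_def
proof clarify
  fix S T assume S: "closedin X S" and T: "closedin X T" and "disjnt S T"
  define separates where "separates C U V \<longleftrightarrow> openin X U \<and> openin X V \<and>
      C \<inter> S \<subseteq> U \<and> C \<inter> T \<subseteq> V \<and> U \<union> V \<subseteq> C \<and> disjnt U V" for C U V
  have "\<exists>U V. separates C U V" if C: "C \<in> \<C>" for C
  proof -
    have "closedin (subtopology X C) (C \<inter> S)" "closedin (subtopology X C) (C \<inter> T)"
      using S T by (simp_all add: Int_commute closedin_subtopology_Int_closed)
    moreover have "disjnt (C \<inter> S) (C \<inter> T)"
      using \<open>disjnt S T\<close> by (auto simp: disjnt_def)
    ultimately obtain U V where UV: "openin (subtopology X C) U" "openin (subtopology X C) V"
        "C \<inter> S \<subseteq> U" "C \<inter> T \<subseteq> V" "disjnt U V"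
      using normal[OF C] unfolding normal_space_def by meson
    moreover have "U \<union> V \<subseteq> C"
      using openin_imp_subset[OF UV(1)] openin_imp_subset[OF UV(2)] by auto
    moreover have "openin X U" "openin X V"
      using UV(1,2) opn[OF C] openin_trans_full by blast+
    ultimately show ?thesis
      by (auto simp: separates_def)
  qed
  then obtain U V where "\<And>C. C \<in> \<C> \<Longrightarrow> separates C (U C) (V C)"
    by metis
  then have opnUV: "\<And>C. C \<in> \<C> \<Longrightarrow> openin X (U C) \<and> openin X (V C)"
    and coverU: "\<And>C. C \<in> \<C> \<Longrightarrow> C \<inter> S \<subseteq> U C"
    and coverV: "\<And>C. C \<in> \<C> \<Longrightarrow> C \<inter> T \<subseteq> V C"
    and pieces: "\<And>C. C \<in> \<C> \<Longrightarrow> U C \<union> V C \<subseteq> C \<and> disjnt (U C) (V C)"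
    unfolding separates_def by blast+
  have covered: "W \<subseteq> (\<Union>C\<in>\<C>. F C)" if "closedin X W" "\<And>C. C \<in> \<C> \<Longrightarrow> C \<inter> W \<subseteq> F C" for W F
  proof
    fix x assume "x \<in> W"
    then have "x \<in> \<Union>\<C>"
      using closedin_subset[OF that(1)] cover by auto
    then obtain C where "C \<in> \<C>" "x \<in> C" ..
    then show "x \<in> (\<Union>C\<in>\<C>. F C)"
      using that(2) \<open>x \<in> W\<close> by blast
  qed
  show "\<exists>U V. openin X U \<and> openin X V \<and> S \<subseteq> U \<and> T \<subseteq> V \<and> disjnt U V"
  proof (intro exI conjI)
    show "openin X (\<Union>C\<in>\<C>. U C)" "openin X (\<Union>C\<in>\<C>. V C)"
      by (rule openin_Union; use opnUV in blast)+
    show "S \<subseteq> (\<Union>C\<in>\<C>. U C)" "T \<subseteq> (\<Union>C\<in>\<C>. V C)"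
      using covered S T coverU coverV by blast+
    show "disjnt (\<Union>C\<in>\<C>. U C) (\<Union>C\<in>\<C>. V C)"
      using dis pieces by (rule disjnt_UN_pieces)
  qed
qed

lemma normal_Hausdorff_space_compact_Hausdorff_partition:
  assumes partition: "\<And>C. C \<in> \<C> \<Longrightarrow> openin X C" "\<Union>\<C> = topspace X" "disjoint \<C>"
    and pieces: "\<And>C. C \<in> \<C> \<Longrightarrow> compact_space (subtopology X C) \<and> Hausdorff_space (subtopology X C)"
  shows "normal_space X \<and> Hausdorff_space X"
proof
  show "normal_space X"
  proof (rule normal_space_open_partition[OF partition])
    fix C assume "C \<in> \<C>"
    then show "normal_space (subtopology X C)"
      using pieces compact_Hausdorff_or_regular_imp_normal_space by blast
  qed
  show "Hausdorff_space X"
  proof (rule Hausdorff_space_open_partition[OF partition])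
    fix C assume "C \<in> \<C>"
    then show "Hausdorff_space (subtopology X C)"
      using pieces by blast
  qed
qed

lemma disjoint_union_compact_Hausdorff_partition:
  assumes "disjoint_union_compact_Hausdorff Y"
  obtains \<C> where "\<And>C. C \<in> \<C> \<Longrightarrow> openin Y C" "\<Union>\<C> = topspace Y" "disjoint \<C>"
    "\<And>C. C \<in> \<C> \<Longrightarrow> compact_space (subtopology Y C) \<and> Hausdorff_space (subtopology Y C)"
proof -
  obtain \<D> where hom: "homeomorphic_map (sum_topology (subtopology Y) \<D>) Y snd"
    and pieces: "\<forall>D\<in>\<D>. compact_space (subtopology Y D) \<and> Hausdorff_space (subtopology Y D)"
    using assms unfolding disjoint_union_compact_Hausdorff_def by blast
  define \<C> where "\<C> = (\<lambda>D. topspace Y \<inter> D) ` \<D>"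
  show ?thesis
  proof
    fix C assume "C \<in> \<C>"
    then obtain D where D: "D \<in> \<D>" "C = topspace Y \<inter> D"
      by (auto simp: \<C>_def)
    have "open_map (subtopology Y D) Y (snd \<circ> Pair D)"
      using open_map_compose open_map_component_injection[OF D(1)] homeomorphic_imp_open_map[OF hom]
      by blast
    then have "openin Y ((snd \<circ> Pair D) ` topspace (subtopology Y D))"
      unfolding open_map_def by blast
    moreover have "(snd \<circ> Pair D) ` topspace (subtopology Y D) = C"
      using D(2) by auto
    ultimately show "openin Y C"
      by simp
  next
    have surj: "snd ` topspace (sum_topology (subtopology Y) \<D>) = topspace Y"
      using homeomorphic_imp_surjective_map[OF hom] .
    show "\<Union>\<C> = topspace Y"
    proof
      show "\<Union>\<C> \<subseteq> topspace Y"
        by (auto simp: \<C>_def)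
      show "topspace Y \<subseteq> \<Union>\<C>"
      proof
        fix x assume "x \<in> topspace Y"
        then obtain D y where "(D, y) \<in> topspace (sum_topology (subtopology Y) \<D>)" "x = y"
          unfolding surj[symmetric] by auto
        then show "x \<in> \<Union>\<C>"
          by (auto simp: \<C>_def)
      qed
    qed
  next
    have inj: "inj_on snd (topspace (sum_topology (subtopology Y) \<D>))"
      using homeomorphic_imp_injective_map[OF hom] .
    show "disjoint \<C>"
    proof (rule pairwiseI)
      fix C E assume "C \<in> \<C>" "E \<in> \<C>" "C \<noteq> E"
      then obtain D1 D2 where D: "D1 \<in> \<D>" "D2 \<in> \<D>" "C = topspace Y \<inter> D1" "E = topspace Y \<inter> D2"
        by (auto simp: \<C>_def)
      have "D1 = D2" if "z \<in> C" "z \<in> E" for z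
        using inj_onD[OF inj, of "(D1, z)" "(D2, z)"] D that by auto
      then show "disjnt C E"
        using \<open>C \<noteq> E\<close> D(3,4) by (auto simp: disjnt_def)
    qed
  next
    fix C assume "C \<in> \<C>"
    then show "compact_space (subtopology Y C) \<and> Hausdorff_space (subtopology Y C)"
      using pieces by (auto simp: \<C>_def subtopology_restrict)
  qed
qed

lemma normal_Hausdorff_space_disjoint_union_compact_Hausdorff:
  assumes "disjoint_union_compact_Hausdorff Y"
  shows "normal_space Y \<and> Hausdorff_space Y"
proof -
  obtain \<C> where "\<And>C. C \<in> \<C> \<Longrightarrow> openin Y C" "\<Union>\<C> = topspace Y" "disjoint \<C>"
    "\<And>C. C \<in> \<C> \<Longrightarrow> compact_space (subtopology Y C) \<and> Hausdorff_space (subtopology Y C)"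
    using disjoint_union_compact_Hausdorff_partition[OF assms] by blast
  then show ?thesis
    by (rule normal_Hausdorff_space_compact_Hausdorff_partition)
qed

lemma compact_space_simplex_top: "compact_space (simplex_top n)"
  unfolding simplex_top_def by (rule compact_space_subtopology[OF compactin_standard_simplex])

lemma Hausdorff_space_simplex_top: "Hausdorff_space (simplex_top n)"
  unfolding simplex_top_def
  by (simp add: Hausdorff_space_subtopology Hausdorff_space_product_topology)

lemma closedin_simplex_boundary: "closedin (simplex_top n) (simplex_boundary n)"
proof -
  have "closedin (powertop_real UNIV) {x. x k = 0}" for k
    using closedin_continuous_map_preimage[OF continuous_map_product_projection, of k UNIV "\<lambda>_. euclideanreal" "{0}"]
    by simp
  then have "closedin (powertop_real UNIV) (\<Union>k\<le>n. {x. x k = 0})"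
    by (intro closedin_Union) auto
  then have "closedin (simplex_top n) (standard_simplex n \<inter> (\<Union>k\<le>n. {x. x k = 0}))"
    unfolding simplex_top_def by (rule closedin_subtopology_Int_closed)
  moreover have "standard_simplex n \<inter> (\<Union>k\<le>n. {x. x k = 0}) = simplex_boundary n"
    by (auto simp: simplex_boundary_def)
  ultimately show ?thesis
    by simp
qed

lemma normal_Hausdorff_space_prod_disjoint_union_compact_Hausdorff:
  assumes K: "compact_space K" "Hausdorff_space K" and Y: "disjoint_union_compact_Hausdorff Y"
  shows "normal_space (prod_topology K Y) \<and> Hausdorff_space (prod_topology K Y)"
proof -
  obtain \<C> where opn: "\<And>C. C \<in> \<C> \<Longrightarrow> openin Y C" and cover: "\<Union>\<C> = topspace Y"
    and dis: "disjoint \<C>"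
    and pieces: "\<And>C. C \<in> \<C> \<Longrightarrow> compact_space (subtopology Y C) \<and> Hausdorff_space (subtopology Y C)"
    using disjoint_union_compact_Hausdorff_partition[OF Y] by blast
  show ?thesis
  proof (rule normal_Hausdorff_space_compact_Hausdorff_partition)
    fix E assume "E \<in> (\<lambda>C. topspace K \<times> C) ` \<C>"
    then obtain C where C: "C \<in> \<C>" "E = topspace K \<times> C"
      by blast
    show "openin (prod_topology K Y) E"
      using C opn by (simp add: openin_prod_Times_iff)
    have "subtopology (prod_topology K Y) E = prod_topology K (subtopology Y C)"
      using C(2) by (simp add: subtopology_Times)
    then show "compact_space (subtopology (prod_topology K Y) E) \<and>
        Hausdorff_space (subtopology (prod_topology K Y) E)"
      using K pieces[OF C(1)] by (simp add: compact_space_prod_topology Hausdorff_space_prod_topology)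
  next
    show "\<Union>((\<lambda>C. topspace K \<times> C) ` \<C>) = topspace (prod_topology K Y)"
      using cover by auto
    show "disjoint ((\<lambda>C. topspace K \<times> C) ` \<C>)"
      using dis by (auto simp: pairwise_def disjnt_def)
  qed
qed

definition functionally_Hausdorff_space :: "'a topology \<Rightarrow> bool" where
  "functionally_Hausdorff_space X \<longleftrightarrow>
     (\<forall>x\<in>topspace X. \<forall>y\<in>topspace X. x \<noteq> y \<longrightarrow>
        (\<exists>g. continuous_map X euclideanreal g \<and> g x \<noteq> g y))"

lemma normal_t1_imp_functionally_Hausdorff_space:
  assumes normal: "normal_space X" and t1: "t1_space X"
  shows "functionally_Hausdorff_space X"
  unfolding functionally_Hausdorff_space_def
proof clarify
  fix x y assume "x \<in> topspace X" "y \<in> topspace X" "x \<noteq> y"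
  then have "closedin X {x}" "closedin X {y}" "disjnt {x} {y}"
    using closedin_t1_singleton[OF t1] by auto
  then obtain g where "continuous_map X euclideanreal g" "g ` {x} \<subseteq> {0}" "g ` {y} \<subseteq> {1::real}"
    using Urysohn_lemma_alt[OF normal] by blast
  then show "\<exists>g. continuous_map X euclideanreal g \<and> g x \<noteq> g y"
    by auto
qed

lemma functionally_Hausdorff_imp_Hausdorff_space:
  assumes "functionally_Hausdorff_space X"
  shows "Hausdorff_space X"
  unfolding Hausdorff_space_def
proof clarify
  fix x y assume "x \<in> topspace X" "y \<in> topspace X" "x \<noteq> y"
  then obtain g where g: "continuous_map X euclideanreal g" "g x \<noteq> g y"
    using assms unfolding functionally_Hausdorff_space_def by blast
  then obtain U V where UV: "open U" "open V" "g x \<in> U" "g y \<in> V" "U \<inter> V = {}"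
    using separation_t2 by metis
  show "\<exists>U V. openin X U \<and> openin X V \<and> x \<in> U \<and> y \<in> V \<and> disjnt U V"
  proof (intro exI conjI)
    show "openin X {z \<in> topspace X. g z \<in> U}" "openin X {z \<in> topspace X. g z \<in> V}"
      using openin_continuous_map_preimage[OF g(1)] UV(1,2) by simp_all
    show "disjnt {z \<in> topspace X. g z \<in> U} {z \<in> topspace X. g z \<in> V}"
      using UV(5) by (auto simp: disjnt_def)
  qed (use UV(3,4) \<open>x \<in> topspace X\<close> \<open>y \<in> topspace X\<close> in auto)
qed

lemma top_pushout_continuous_maps:
  assumes "top_pushout C B A f Z i j"
  shows "continuous_map C Z i" "continuous_map B Z j"
  using assms unfolding top_pushout_def by blast+

lemma top_pushout_attach:
  assumes "top_pushout C B A f Z i j" "a \<in> A"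
  shows "i (f a) = j a"
  using assms unfolding top_pushout_def by blast

lemma topspace_top_pushout:
  assumes "top_pushout C B A f Z i j"
  shows "topspace Z = i ` topspace C \<union> j ` topspace B"
  using assms unfolding top_pushout_def by blast

lemma continuous_map_from_top_pushout:
  assumes pushout: "top_pushout C B A f Z i j" and k: "k \<in> topspace Z \<rightarrow> topspace W"
    and ki: "continuous_map C W (k \<circ> i)" and kj: "continuous_map B W (k \<circ> j)"
  shows "continuous_map Z W k"
  unfolding continuous_map_def
proof (intro conjI allI impI)
  have opn: "\<And>U. U \<subseteq> topspace Z \<Longrightarrow>
      openin Z U \<longleftrightarrow> openin C {x \<in> topspace C. i x \<in> U} \<and> openin B {x \<in> topspace B. j x \<in> U}"
    using pushout unfolding top_pushout_def by blast
  fix U assume U: "openin W U"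
  let ?V = "{z \<in> topspace Z. k z \<in> U}"
  have "{x \<in> topspace C. i x \<in> ?V} = {x \<in> topspace C. (k \<circ> i) x \<in> U}"
    using continuous_map_funspace[OF top_pushout_continuous_maps(1)[OF pushout]] by auto
  moreover have "{x \<in> topspace B. j x \<in> ?V} = {x \<in> topspace B. (k \<circ> j) x \<in> U}"
    using continuous_map_funspace[OF top_pushout_continuous_maps(2)[OF pushout]] by auto
  ultimately show "openin Z ?V"
    using opn[of ?V] openin_continuous_map_preimage[OF ki U] openin_continuous_map_preimage[OF kj U]
    by simp
qed (fact k)

lemma top_pushout_fibre_eq:
  fixes C :: "'a topology" and B :: "'b topology"
  assumes pushout: "top_pushout C B A f Z i j" and agree: "\<And>a. a \<in> A \<Longrightarrow> h a = g (f a)"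
    and uv: "u \<in> topspace C <+> topspace B" "v \<in> topspace C <+> topspace B"
    and eq: "case_sum i j u = case_sum i j v"
  shows "case_sum g h u = case_sum g h v"
proof -
  define R where "R u v \<longleftrightarrow> (\<exists>a\<in>A. u = Inl (f a) \<and> v = Inr a)" for u v :: "'a + 'b"
  have "equivclp R u v"
    using pushout uv eq unfolding top_pushout_def R_def by blast
  then show ?thesis
  proof (induction rule: equivclp_induct)
    case (step v w)
    then show ?case
      using agree unfolding R_def by auto
  qed simp
qed

lemma top_pushout_universal:
  assumes pushout: "top_pushout C B A f Z i j"
    and g: "continuous_map C W g" and h: "continuous_map B W h"
    and agree: "\<And>a. a \<in> A \<Longrightarrow> h a = g (f a)"
  obtains k where "continuous_map Z W k"
    "\<And>c. c \<in> topspace C \<Longrightarrow> k (i c) = g c" "\<And>b. b \<in> topspace B \<Longrightarrow> k (j b) = h b"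
proof -
  note fibre_eq = top_pushout_fibre_eq[where g = g and h = h, OF pushout agree]
  \<comment> \<open>Well defined by \<open>top_pushout_fibre_eq\<close>, whichever preimage of \<open>z\<close> is chosen.\<close>
  define k where "k z = (if z \<in> i ` topspace C then g (inv_into (topspace C) i z)
                         else h (inv_into (topspace B) j z))" for z
  have k_i: "k (i c) = g c" if c: "c \<in> topspace C" for c
  proof -
    let ?c = "inv_into (topspace C) i (i c)"
    have "?c \<in> topspace C" "i ?c = i c"
      using c by (auto intro: inv_into_into f_inv_into_f)
    then show ?thesis
      using fibre_eq[of "Inl ?c" "Inl c"] c by (simp add: k_def InlI)
  qed
  have k_j: "k (j b) = h b" if b: "b \<in> topspace B" for b
  proof (cases "j b \<in> i ` topspace C")
    case True
    then obtain c where "c \<in> topspace C" "j b = i c"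
      by blast
    then show ?thesis
      using fibre_eq[of "Inl c" "Inr b"] b k_i by (simp add: InlI InrI)
  next
    case False
    let ?b = "inv_into (topspace B) j (j b)"
    have "?b \<in> topspace B" "j ?b = j b"
      using b by (auto intro: inv_into_into f_inv_into_f)
    then show ?thesis
      using fibre_eq[of "Inr ?b" "Inr b"] b False by (simp add: k_def InrI)
  qed
  have "continuous_map Z W k"
  proof (rule continuous_map_from_top_pushout[OF pushout])
    show "k \<in> topspace Z \<rightarrow> topspace W"
      using topspace_top_pushout[OF pushout] k_i k_j
        continuous_map_funspace[OF g] continuous_map_funspace[OF h] by auto
    show "continuous_map C W (k \<circ> i)"
      using g by (rule continuous_map_eq) (simp add: k_i)
    show "continuous_map B W (k \<circ> j)"
      using h by (rule continuous_map_eq) (simp add: k_j)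
  qed
  with k_i k_j that show ?thesis
    by blast
qed

locale normal_attaching =
  fixes C :: "'a topology" and B :: "'b topology" and A :: "'b set" and f :: "'b \<Rightarrow> 'a"
    and Z :: "'z topology" and i :: "'a \<Rightarrow> 'z" and j :: "'b \<Rightarrow> 'z"
  assumes pushout: "top_pushout C B A f Z i j"
    and normal: "normal_space B" and t1: "t1_space B" and closed: "closedin B A"
    and attaching: "continuous_map (subtopology B A) C f"
begin

lemma extend_real_function:
  assumes g: "continuous_map C euclideanreal g"
  shows "\<exists>k. continuous_map Z euclideanreal k \<and> (\<forall>c\<in>topspace C. k (i c) = g c)"
proof -
  obtain h where h: "continuous_map B euclideanreal h" "\<And>a. a \<in> A \<Longrightarrow> h a = g (f a)"
    using Tietze_extension_realinterval[OF normal closed, of UNIV "g \<circ> f"]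
      continuous_map_compose[OF attaching g] by auto
  obtain k where "continuous_map Z euclideanreal k" "\<And>c. c \<in> topspace C \<Longrightarrow> k (i c) = g c"
    using top_pushout_universal[OF pushout g h] by blast
  then show ?thesis
    by blast
qed

lemma topspace_attaching: "topspace Z = i ` topspace C \<union> j ` (topspace B - A)"
proof -
  have "j a \<in> i ` topspace C" if "a \<in> A" for a
  proof -
    have "f a \<in> topspace C"
      using continuous_map_funspace[OF attaching] closedin_subset[OF closed] that by auto
    then show ?thesis
      using top_pushout_attach[OF pushout that] by force
  qed
  then show ?thesis
    unfolding topspace_top_pushout[OF pushout] by blast
qed

lemma bump_function:
  assumes S: "closedin B S" "A \<subseteq> S" and b: "b \<in> topspace B" "b \<notin> S"
  obtains k where "continuous_map Z euclideanreal k" "k (j b) = 1"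
    "\<And>c. c \<in> topspace C \<Longrightarrow> k (i c) = 0" "\<And>s. s \<in> S \<Longrightarrow> k (j s) = 0"
proof -
  have "closedin B {b}" "disjnt S {b}"
    using closedin_t1_singleton[OF t1 b(1)] b(2) by auto
  then obtain u where u: "continuous_map B euclideanreal u" "u ` S \<subseteq> {0}" "u ` {b} \<subseteq> {1::real}"
    using Urysohn_lemma_alt[OF normal S(1)] by blast
  have "continuous_map C euclideanreal (\<lambda>_. 0)"
    by simp
  then obtain k where k: "continuous_map Z euclideanreal k" "\<And>c. c \<in> topspace C \<Longrightarrow> k (i c) = 0"
      "\<And>x. x \<in> topspace B \<Longrightarrow> k (j x) = u x"
    using top_pushout_universal[OF pushout _ u(1)] u(2) S(2) by blast
  show ?thesis
  proof (rule that[OF k(1)])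
    show "k (j b) = 1"
      using k(3)[OF b(1)] u(3) by simp
    show "k (j s) = 0" if "s \<in> S" for s
      using k(3) u(2) closedin_subset[OF S(1)] that by auto
  qed (rule k(2))
qed

lemma separate_from_cell_point:
  assumes b: "b \<in> topspace B - A" and z: "z \<in> topspace Z" "z \<noteq> j b"
  obtains k where "continuous_map Z euclideanreal k" "k (j b) \<noteq> k z"
proof -
  \<comment> \<open>Either \<open>S = A\<close>, or \<open>z = j b'\<close> for a cell point \<open>b' \<noteq> b\<close> and \<open>S = A \<union> {b'}\<close>.\<close>
  obtain S where S: "closedin B S" "A \<subseteq> S" "b \<notin> S" and zS: "z \<in> i ` topspace C \<union> j ` S"
  proof -
    from z(1) consider "z \<in> i ` topspace C" | b' where "b' \<in> topspace B - A" "z = j b'"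
      using topspace_attaching by blast
    then show thesis
    proof cases
      case 1
      then show ?thesis
        using that[of A] closed b by blast
    next
      case 2
      have "closedin B (A \<union> {b'})"
        using closed closedin_t1_singleton[OF t1] 2(1) by blast
      then show ?thesis
        using that[of "A \<union> {b'}"] 2 b z(2) by blast
    qed
  qed
  obtain k where k: "continuous_map Z euclideanreal k" "k (j b) = 1"
      "\<And>c. c \<in> topspace C \<Longrightarrow> k (i c) = 0" "\<And>s. s \<in> S \<Longrightarrow> k (j s) = 0"
    using bump_function[OF S(1,2) _ S(3)] b by blast
  have "k z = 0"
    using zS k(3,4) by blast
  with k(1,2) that show ?thesis
    by simp
qed

lemma functionally_Hausdorff_space_attaching:
  assumes "functionally_Hausdorff_space C"
  shows "functionally_Hausdorff_space Z"
proof -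
  have cell: "\<exists>g. continuous_map Z euclideanreal g \<and> g z \<noteq> g w"
    if z: "z \<in> topspace Z" "z \<notin> i ` topspace C" and w: "w \<in> topspace Z" "z \<noteq> w" for z w
  proof -
    have "z \<in> j ` (topspace B - A)"
      using z unfolding topspace_attaching by blast
    then obtain b where b: "b \<in> topspace B - A" "z = j b"
      by blast
    obtain k where "continuous_map Z euclideanreal k" "k (j b) \<noteq> k w"
      using separate_from_cell_point[OF b(1) w(1)] b(2) w(2) by blast
    then show ?thesis
      using b(2) by blast
  qed
  have stage: "\<exists>g. continuous_map Z euclideanreal g \<and> g (i c1) \<noteq> g (i c2)"
    if c: "c1 \<in> topspace C" "c2 \<in> topspace C" "i c1 \<noteq> i c2" for c1 c2
  proof -
    have "c1 \<noteq> c2"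
      using c(3) by blast
    then obtain g where g: "continuous_map C euclideanreal g" "g c1 \<noteq> g c2"
      using assms c(1,2) unfolding functionally_Hausdorff_space_def by blast
    obtain k where "continuous_map Z euclideanreal k" "\<And>c. c \<in> topspace C \<Longrightarrow> k (i c) = g c"
      using extend_real_function[OF g(1)] by blast
    then show ?thesis
      using c(1,2) g(2) by auto
  qed
  show ?thesis
    unfolding functionally_Hausdorff_space_def
  proof clarify
    fix x y assume xy: "x \<in> topspace Z" "y \<in> topspace Z" "x \<noteq> y"
    show "\<exists>g. continuous_map Z euclideanreal g \<and> g x \<noteq> g y"
    proof (cases "x \<in> i ` topspace C \<and> y \<in> i ` topspace C")
      case True
      then show ?thesis
        using stage xy(3) by blast
    next
      case False
      then show ?thesis
        using cell[of x y] cell[of y x] xy by (metis (mono_tags))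
    qed
  qed
qed

end

locale continuous_seq_colimit =
  fixes X :: "nat \<Rightarrow> 'a topology" and i :: "nat \<Rightarrow> 'a \<Rightarrow> 'a"
    and Xc :: "'c topology" and \<iota> :: "nat \<Rightarrow> 'a \<Rightarrow> 'c"
  assumes colimit: "top_seq_colimit X i Xc \<iota>"
    and continuous_bond: "\<And>n. continuous_map (X n) (X (Suc n)) (i (Suc n))"
begin

lemma continuous_map_injection: "continuous_map (X n) Xc (\<iota> n)"
  using colimit by (simp add: top_seq_colimit_def)

lemma injection_bond: "x \<in> topspace (X n) \<Longrightarrow> \<iota> (Suc n) (i (Suc n) x) = \<iota> n x"
  using colimit by (simp add: top_seq_colimit_def)

lemma topspace_colimit: "topspace Xc = (\<Union>n. \<iota> n ` topspace (X n))"
  using colimit by (simp add: top_seq_colimit_def)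

lemma injection_eq_imp_chain_map_eq:
  assumes "x \<in> topspace (X n)" "y \<in> topspace (X m)" "\<iota> n x = \<iota> m y"
  obtains d e where "n + d = m + e" "chain_map i n d x = chain_map i m e y"
proof -
  have "\<forall>n m x y. x \<in> topspace (X n) \<longrightarrow> y \<in> topspace (X m) \<longrightarrow> \<iota> n x = \<iota> m y \<longrightarrow>
      (\<exists>d e. n + d = m + e \<and> chain_map i n d x = chain_map i m e y)"
    using colimit unfolding top_seq_colimit_def by (elim conjE) assumption
  then show ?thesis
    using assms that by meson
qed

lemma openin_colimit:
  assumes "U \<subseteq> topspace Xc"
  shows "openin Xc U \<longleftrightarrow> (\<forall>n. openin (X n) {x \<in> topspace (X n). \<iota> n x \<in> U})"
proof -
  have "\<forall>U. U \<subseteq> topspace Xc \<longrightarrow>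
      (openin Xc U \<longleftrightarrow> (\<forall>n. openin (X n) {x \<in> topspace (X n). \<iota> n x \<in> U}))"
    using colimit unfolding top_seq_colimit_def by (elim conjE) assumption
  then show ?thesis
    using assms by simp
qed

lemma continuous_map_chain_map: "continuous_map (X n) (X (n + d)) (chain_map i n d)"
proof (induction d)
  case (Suc d)
  then show ?case
    using continuous_map_compose[OF Suc continuous_bond] by (simp add: o_def)
qed simp

lemma chain_map_in_topspace: "x \<in> topspace (X n) \<Longrightarrow> chain_map i n d x \<in> topspace (X (n + d))"
  using continuous_map_funspace[OF continuous_map_chain_map] by blast

lemma injection_chain_map:
  assumes "x \<in> topspace (X n)"
  shows "\<iota> (n + d) (chain_map i n d x) = \<iota> n x"
proof (induction d)
  case (Suc d)
  then show ?case
    using injection_bond[OF chain_map_in_topspace[OF assms, of d]] by simp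
qed simp

lemma common_stage:
  assumes "z \<in> topspace Xc" "w \<in> topspace Xc"
  obtains N x y where "x \<in> topspace (X N)" "y \<in> topspace (X N)" "\<iota> N x = z" "\<iota> N y = w"
proof -
  obtain n x where x: "x \<in> topspace (X n)" "\<iota> n x = z"
    using assms(1) unfolding topspace_colimit by blast
  obtain m y where y: "y \<in> topspace (X m)" "\<iota> m y = w"
    using assms(2) unfolding topspace_colimit by blast
  show ?thesis
  proof (rule that)
    show "chain_map i n m x \<in> topspace (X (n + m))" "\<iota> (n + m) (chain_map i n m x) = z"
      using x chain_map_in_topspace injection_chain_map by auto
    show "chain_map i m n y \<in> topspace (X (n + m))" "\<iota> (n + m) (chain_map i m n y) = w"
      using y chain_map_in_topspace[of y m n] injection_chain_map[of y m n] by (simp_all add: add.commute)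
  qed
qed

lemma compatible_chain_map:
  assumes compatible: "\<And>k x. x \<in> topspace (X (N + k)) \<Longrightarrow> h (Suc k) (i (Suc (N + k)) x) = h k x"
    and x: "x \<in> topspace (X (N + k))"
  shows "h (k + d) (chain_map i (N + k) d x) = h k x"
proof (induction d)
  case (Suc d)
  have "chain_map i (N + k) d x \<in> topspace (X (N + (k + d)))"
    using chain_map_in_topspace[OF x, of d] by (simp add: add.assoc)
  then show ?case
    using compatible Suc by (simp add: add.assoc)
qed simp

lemma continuous_map_from_colimit:
  assumes G: "G \<in> topspace Xc \<rightarrow> topspace W" and stages: "\<And>n. continuous_map (X n) W (G \<circ> \<iota> n)"
  shows "continuous_map Xc W G"
  unfolding continuous_map_def
proof (intro conjI allI impI)
  fix U assume U: "openin W U"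
  have "openin (X n) {x \<in> topspace (X n). \<iota> n x \<in> {z \<in> topspace Xc. G z \<in> U}}" for n
  proof -
    have "{x \<in> topspace (X n). \<iota> n x \<in> {z \<in> topspace Xc. G z \<in> U}} =
        {x \<in> topspace (X n). (G \<circ> \<iota> n) x \<in> U}"
      using continuous_map_funspace[OF continuous_map_injection] by auto
    then show ?thesis
      using openin_continuous_map_preimage[OF stages U] by simp
  qed
  then show "openin Xc {z \<in> topspace Xc. G z \<in> U}"
    by (subst openin_colimit) auto
qed (fact G)

lemma colimit_induced_map:
  assumes h: "\<And>k. continuous_map (X (N + k)) W (h k)"
    and compatible: "\<And>k x. x \<in> topspace (X (N + k)) \<Longrightarrow> h (Suc k) (i (Suc (N + k)) x) = h k x"
  obtains G where "continuous_map Xc W G" "\<And>k x. x \<in> topspace (X (N + k)) \<Longrightarrow> G (\<iota> (N + k) x) = h k x"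
proof -
  \<comment> \<open>Well defined: two representatives of a point of the colimit are identified by finitely
    many bonding maps, and the family \<open>h\<close> is compatible with these.\<close>
  define G where "G z = (SOME v. \<exists>k x. x \<in> topspace (X (N + k)) \<and> \<iota> (N + k) x = z \<and> v = h k x)" for z
  have G_stage: "G (\<iota> (N + k) x) = h k x" if x: "x \<in> topspace (X (N + k))" for k x
  proof -
    have "\<exists>v k' x'. x' \<in> topspace (X (N + k')) \<and> \<iota> (N + k') x' = \<iota> (N + k) x \<and> v = h k' x'"
      using x by blast
    then have "\<exists>k' x'. x' \<in> topspace (X (N + k')) \<and> \<iota> (N + k') x' = \<iota> (N + k) x \<and>
        G (\<iota> (N + k) x) = h k' x'"
      unfolding G_def by (rule someI_ex)
    then obtain k' x' where x': "x' \<in> topspace (X (N + k'))" "\<iota> (N + k') x' = \<iota> (N + k) x"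
        "G (\<iota> (N + k) x) = h k' x'"
      by blast
    obtain d e where "N + k' + d = N + k + e" "chain_map i (N + k') d x' = chain_map i (N + k) e x"
      using injection_eq_imp_chain_map_eq[OF x'(1) x x'(2)] by blast
    then have "h (k' + d) (chain_map i (N + k') d x') = h (k + e) (chain_map i (N + k) e x)"
      by simp
    then show ?thesis
      using x'(3) compatible_chain_map[where N = N and h = h, OF compatible x'(1)]
        compatible_chain_map[where N = N and h = h, OF compatible x] by simp
  qed
  have G_any_stage: "G (\<iota> n x) = h n (chain_map i n N x)" if x: "x \<in> topspace (X n)" for n x
    using G_stage[of "chain_map i n N x" n] chain_map_in_topspace[OF x, of N] injection_chain_map[OF x, of N]
    by (simp add: add.commute)
  have "continuous_map Xc W G"
  proof (rule continuous_map_from_colimit)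
    show "G \<in> topspace Xc \<rightarrow> topspace W"
    proof
      fix z assume "z \<in> topspace Xc"
      then obtain n x where "x \<in> topspace (X n)" "z = \<iota> n x"
        using topspace_colimit by blast
      then show "G z \<in> topspace W"
        using G_any_stage continuous_map_funspace[OF h] chain_map_in_topspace[of x n N]
        by (fastforce simp: add.commute)
    qed
    fix n
    have "continuous_map (X n) (X (N + n)) (chain_map i n N)"
      using continuous_map_chain_map[of n N] by (simp add: add.commute)
    then have "continuous_map (X n) W (h n \<circ> chain_map i n N)"
      using h[of n] by (rule continuous_map_compose)
    then show "continuous_map (X n) W (G \<circ> \<iota> n)"
      by (rule continuous_map_eq) (simp add: G_any_stage)
  qed
  with G_stage that show ?thesis
    by blast
qed

lemma extend_through_stages:
  assumes extend: "\<And>n g. continuous_map (X n) W g \<Longrightarrow>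
      \<exists>k. continuous_map (X (Suc n)) W k \<and> (\<forall>x\<in>topspace (X n). k (i (Suc n) x) = g x)"
    and g: "continuous_map (X N) W g"
  obtains G where "continuous_map Xc W G" "\<And>x. x \<in> topspace (X N) \<Longrightarrow> G (\<iota> N x) = g x"
proof -
  define P where "P k hk \<longleftrightarrow> continuous_map (X (N + k)) W hk \<and> (k = 0 \<longrightarrow> hk = g)" for k hk
  define Q where "Q k hk hk' \<longleftrightarrow> (\<forall>x\<in>topspace (X (N + k)). hk' (i (Suc (N + k)) x) = hk x)"
    for k and hk hk' :: "'a \<Rightarrow> 'b"
  have "\<exists>h. \<forall>k. P k (h k) \<and> Q k (h k) (h (Suc k))"
  proof (rule dependent_nat_choice)
    show "\<exists>h0. P 0 h0"
      using g by (auto simp: P_def)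
    show "\<exists>hk'. P (Suc k) hk' \<and> Q k hk hk'" if "P k hk" for hk k
      using extend[of "N + k" hk] that by (auto simp: P_def Q_def)
  qed
  then obtain h where "\<And>k. P k (h k) \<and> Q k (h k) (h (Suc k))"
    by blast
  then have "\<And>k. continuous_map (X (N + k)) W (h k)" "h 0 = g"
    and "\<And>k x. x \<in> topspace (X (N + k)) \<Longrightarrow> h (Suc k) (i (Suc (N + k)) x) = h k x"
    unfolding P_def Q_def by blast+
  then obtain G where G: "continuous_map Xc W G"
      "\<And>k x. x \<in> topspace (X (N + k)) \<Longrightarrow> G (\<iota> (N + k) x) = h k x"
    using colimit_induced_map[of N W h] by blast
  show ?thesis
  proof (rule that[OF G(1)])
    show "G (\<iota> N x) = g x" if "x \<in> topspace (X N)" for x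
      using G(2)[of x 0] that \<open>h 0 = g\<close> by simp
  qed
qed

lemma functionally_Hausdorff_space_colimit:
  assumes "\<And>n. functionally_Hausdorff_space (X n)"
    and extend: "\<And>n g. continuous_map (X n) euclideanreal g \<Longrightarrow>
      \<exists>k. continuous_map (X (Suc n)) euclideanreal k \<and> (\<forall>x\<in>topspace (X n). k (i (Suc n) x) = g x)"
  shows "functionally_Hausdorff_space Xc"
  unfolding functionally_Hausdorff_space_def
proof clarify
  fix z w assume zw: "z \<in> topspace Xc" "w \<in> topspace Xc" "z \<noteq> w"
  obtain N x y where xy: "x \<in> topspace (X N)" "y \<in> topspace (X N)" "\<iota> N x = z" "\<iota> N y = w"
    using common_stage[OF zw(1,2)] by blast
  moreover have "x \<noteq> y"
    using xy(3,4) zw(3) by blast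
  ultimately obtain g where g: "continuous_map (X N) euclideanreal g" "g x \<noteq> g y"
    using assms(1)[of N] unfolding functionally_Hausdorff_space_def by blast
  obtain G where G: "continuous_map Xc euclideanreal G" "\<And>x. x \<in> topspace (X N) \<Longrightarrow> G (\<iota> N x) = g x"
    using extend_through_stages[OF extend g(1)] by blast
  have "G z \<noteq> G w"
    using G(2)[OF xy(1)] G(2)[OF xy(2)] xy(3,4) g(2) by simp
  with G(1) show "\<exists>G. continuous_map Xc euclideanreal G \<and> G z \<noteq> G w"
    by blast
qed

end

lemma KW_cell_data_attaching:
  assumes "KW_cell_data X Y f i \<Phi>"
  shows "normal_attaching (X n) (prod_topology (simplex_top (Suc n)) (Y (Suc n)))
    (simplex_boundary (Suc n) \<times> topspace (Y (Suc n))) (f (Suc n)) (X (Suc n)) (i (Suc n)) (\<Phi> (Suc n))"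
proof
  let ?B = "prod_topology (simplex_top (Suc n)) (Y (Suc n))"
  have "disjoint_union_compact_Hausdorff (Y (Suc n))"
    using assms unfolding KW_cell_data_def by simp
  with compact_space_simplex_top Hausdorff_space_simplex_top
  have "normal_space ?B \<and> Hausdorff_space ?B"
    by (rule normal_Hausdorff_space_prod_disjoint_union_compact_Hausdorff)
  then show "normal_space ?B" "t1_space ?B"
    using Hausdorff_imp_t1_space by blast+
  show "closedin ?B (simplex_boundary (Suc n) \<times> topspace (Y (Suc n)))"
    using closedin_simplex_boundary by (simp add: closedin_prod_Times_iff)
qed (use assms in \<open>simp_all add: KW_cell_data_def\<close>)

lemma KW_cell_data_functionally_Hausdorff:
  assumes "KW_cell_data X Y f i \<Phi>"
  shows "functionally_Hausdorff_space (X n)"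
proof (induction n)
  case 0
  have "disjoint_union_compact_Hausdorff (X 0)"
    using assms unfolding KW_cell_data_def by simp
  then have "normal_space (X 0) \<and> Hausdorff_space (X 0)"
    by (rule normal_Hausdorff_space_disjoint_union_compact_Hausdorff)
  then show ?case
    by (simp add: normal_t1_imp_functionally_Hausdorff_space Hausdorff_imp_t1_space)
next
  case (Suc n)
  then show ?case
    by (rule normal_attaching.functionally_Hausdorff_space_attaching[OF KW_cell_data_attaching[OF assms]])
qed

theorem lemma2p19:
  fixes X :: "nat \<Rightarrow> 'a topology" and Y :: "nat \<Rightarrow> 'b topology"
    and f :: "nat \<Rightarrow> (nat \<Rightarrow> real) \<times> 'b \<Rightarrow> 'a" and i :: "nat \<Rightarrow> 'a \<Rightarrow> 'a"
    and \<Phi> :: "nat \<Rightarrow> (nat \<Rightarrow> real) \<times> 'b \<Rightarrow> 'a"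
    and Xc :: "'c topology" and \<iota> :: "nat \<Rightarrow> 'a \<Rightarrow> 'c"
  assumes "KW_cell_data X Y f i \<Phi>"
    and "top_seq_colimit X i Xc \<iota>"
  shows "Hausdorff_space Xc"
proof -
  note attaching = KW_cell_data_attaching[OF assms(1)]
  have colimit: "continuous_seq_colimit X i Xc \<iota>"
    using assms(2) top_pushout_continuous_maps(1)[OF normal_attaching.pushout[OF attaching]]
    by (simp add: continuous_seq_colimit_def)
  have "functionally_Hausdorff_space Xc"
    by (rule continuous_seq_colimit.functionally_Hausdorff_space_colimit[OF colimit
          KW_cell_data_functionally_Hausdorff[OF assms(1)] normal_attaching.extend_real_function[OF attaching]])
  then show ?thesis
    by (rule functionally_Hausdorff_imp_Hausdorff_space)
qed

end
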